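(* Let $(E,\|\cdot\|_E)$ be a fully symmetric sequence space. The following are equivalent: (i) $E$ has the uniform individual ergodic theorem property, i.e. for every $x\in E$ and every Dunford–Schwartz operator $T$ on $l_\infty$ there exists $\widehat{x}\in E$ with $\big\|\frac1n\sum_{k=0}^{n-1}T^k(x)-\widehat{x}\big\|_\infty\to0$; (ii) $E\subset c_0$; (iii) $\mathbf 1=\{1,1,1,\dots\}\notin E$.
   Context: $l_\infty$ is the Banach lattice of bounded real sequences $x=\{(x)_n\}_{n\ge1}$ with $\|x\|_\infty=\sup_n|(x)_n|$; $c_0$ is the subspace of sequences converging to $0$; $l_1$ is the space of absolutely summable sequences with $\|x\|_1=\sum_n|(x)_n|$. A linear operator $T:l_\infty\to l_\infty$ is a Dunford–Schwartz operator if $\|T(x)\|_1\le\|x\|_1$ for all $x\in l_1$ and $\|T(x)\|_\infty\le\|x\|_\infty$ for all $x\in l_\infty$. For $x\in l_\infty$, its non-increasing rearrangement is the sequence $x^*$ with $(x^* )_n=\inf\{\sup_{m\notin F}|(x)_m| : F\subset\mathbb N\text{ finite}, \operatorname{card}(F)<n\}$. A symmetric sequence space is a nonzero linear subspace $E\subset l_\infty$ with a Banach norm $\|\cdot\|_E$ such that $y\in E$, $x\in l_\infty$, $x^*\le y^*$ imply $x\in E$ and $\|x\|_E\le\|y\|_E$ (normalized so that $\|\{1,0,0,\dots\}\|_E=1$). Write $x\prec y$ if $\sum_{n=1}^k(x^* )_n\le\sum_{n=1}^k(y^* )_n$ for all $k$. A symmetric sequence space $E$ is fully symmetric if $x\in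 l_\infty$, $y\in E$, $x\prec y$ imply $x\in E$ and $\|x\|_E\le\|y\|_E$. *)

theory Defs
  imports "HOL-Analysis.Analysis"
begin

text \<open>Sequences are indexed by nat starting at 0 (the paper's index n corresponds to n-1 here).\<close>

type_synonym seq = "nat \<Rightarrow> real"

definition linf :: "seq set" where
  "linf = {x. bounded (range x)}"

definition sup_norm :: "seq \<Rightarrow> real" where
  "sup_norm x = (SUP n. \<bar>x n\<bar>)"

definition l1 :: "seq set" where
  "l1 = {x. summable (\<lambda>n. \<bar>x n\<bar>)}"

definition l1_norm :: "seq \<Rightarrow> real" where
  "l1_norm x = (\<Sum>n. \<bar>x n\<bar>)"

definition c0 :: "seq set" where
  "c0 = {x. x \<longlonglongrightarrow> 0}"

definition one_seq :: seq where
  "one_seq = (\<lambda>_. 1)"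

text \<open>Linear operator on l_infty (only its values on l_infty matter).\<close>
definition linear_on_linf :: "(seq \<Rightarrow> seq) \<Rightarrow> bool" where
  "linear_on_linf T \<longleftrightarrow>
     (\<forall>x\<in>linf. T x \<in> linf) \<and>
     (\<forall>x\<in>linf. \<forall>y\<in>linf. T (\<lambda>n. x n + y n) = (\<lambda>n. T x n + T y n)) \<and>
     (\<forall>x\<in>linf. \<forall>c::real. T (\<lambda>n. c * x n) = (\<lambda>n. c * T x n))"

definition dunford_schwartz :: "(seq \<Rightarrow> seq) \<Rightarrow> bool" where
  "dunford_schwartz T \<longleftrightarrow> linear_on_linf T \<and>
     (\<forall>x\<in>l1. T x \<in> l1 \<and> l1_norm (T x) \<le> l1_norm x) \<and>
     (\<forall>x\<in>linf. sup_norm (T x) \<le> sup_norm x)"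

text \<open>Non-increasing rearrangement; meaningful for n \<ge> 1 (paper's (x^*)_n).\<close>
definition rearr :: "seq \<Rightarrow> nat \<Rightarrow> real" where
  "rearr x n = Inf {(SUP m\<in>(- F). \<bar>x m\<bar>) | F. finite F \<and> card F < n}"

definition majorized :: "seq \<Rightarrow> seq \<Rightarrow> bool" (infix "\<prec>" 50) where
  "x \<prec> y \<longleftrightarrow> (\<forall>k. (\<Sum>n=1..k. rearr x n) \<le> (\<Sum>n=1..k. rearr y n))"

definition banach_norm_on :: "seq set \<Rightarrow> (seq \<Rightarrow> real) \<Rightarrow> bool" where
  "banach_norm_on E NE \<longleftrightarrow>
     (\<forall>x\<in>E. NE x \<ge> 0 \<and> (NE x = 0 \<longleftrightarrow> x = (\<lambda>_. 0))) \<and>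
     (\<forall>x\<in>E. \<forall>c::real. NE (\<lambda>n. c * x n) = \<bar>c\<bar> * NE x) \<and>
     (\<forall>x\<in>E. \<forall>y\<in>E. NE (\<lambda>n. x n + y n) \<le> NE x + NE y) \<and>
     (\<forall>X::nat \<Rightarrow> seq. (\<forall>k. X k \<in> E) \<and>
        (\<forall>e>0. \<exists>N. \<forall>m\<ge>N. \<forall>k\<ge>N. NE (\<lambda>n. X m n - X k n) < e) \<longrightarrow>
        (\<exists>l\<in>E. (\<lambda>k. NE (\<lambda>n. X k n - l n)) \<longlonglongrightarrow> 0))"

definition symmetric_seq_space :: "seq set \<Rightarrow> (seq \<Rightarrow> real) \<Rightarrow> bool" where
  "symmetric_seq_space E NE \<longleftrightarrow>
     E \<subseteq> linf \<and> E \<noteq> {\<lambda>_. 0} \<and> (\<lambda>_. 0) \<in> E \<and>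
     (\<forall>x\<in>E. \<forall>y\<in>E. (\<lambda>n. x n + y n) \<in> E) \<and>
     (\<forall>x\<in>E. \<forall>c::real. (\<lambda>n. c * x n) \<in> E) \<and>
     banach_norm_on E NE \<and>
     (\<forall>x y. y \<in> E \<and> x \<in> linf \<and> (\<forall>n\<ge>1. rearr x n \<le> rearr y n) \<longrightarrow>
        x \<in> E \<and> NE x \<le> NE y) \<and>
     NE (\<lambda>n. if n = 0 then 1 else 0) = 1"

definition fully_symmetric :: "seq set \<Rightarrow> (seq \<Rightarrow> real) \<Rightarrow> bool" where
  "fully_symmetric E NE \<longleftrightarrow> symmetric_seq_space E NE \<and>
     (\<forall>x y. x \<in> linf \<and> y \<in> E \<and> x \<prec> y \<longrightarrow> x \<in> E \<and> NE x \<le> NE y)"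

definition ergodic_avg :: "(seq \<Rightarrow> seq) \<Rightarrow> seq \<Rightarrow> nat \<Rightarrow> seq" where
  "ergodic_avg T x n = (\<lambda>m. (1 / real n) * (\<Sum>k<n. (T ^^ k) x m))"

definition uniform_IET_property :: "seq set \<Rightarrow> bool" where
  "uniform_IET_property E \<longleftrightarrow>
     (\<forall>x\<in>E. \<forall>T. dunford_schwartz T \<longrightarrow>
        (\<exists>xh\<in>E. (\<lambda>n. sup_norm (\<lambda>m. ergodic_avg T x n m - xh m)) \<longlonglongrightarrow> 0))"

end

theory Submission
  imports Defs
begin

text \<open>Suppose \<open>E \<subseteq> c0\<close> and let \<open>T\<close> be a Dunford--Schwartz operator. On \<open>l1\<close> the operator \<open>T\<close> is
  a contraction of \<open>l2\<close> (Schur's test), so for \<open>x \<in> l1\<close> Birkhoff's argument with the vectors of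
  almost minimal norm in the convex hull of the orbit of \<open>x\<close> shows that the ergodic averages of \<open>x\<close>
  are Cauchy in \<open>l2\<close>, hence uniformly Cauchy; truncation extends this to all \<open>x \<in> c0\<close>. The uniform
  limit \<open>xh\<close> is majorized by \<open>x\<close>: splitting \<open>x = a + b\<close> with \<open>a \<in> l1\<close> and \<open>\<bar>b\<bar> \<le> x\<^sup>*\<^sub>k\<close>, every
  \<open>k\<close> entries of \<open>xh\<close> sum to at most \<open>\<parallel>a\<parallel>\<^sub>1 + k x\<^sup>*\<^sub>k = x\<^sup>*\<^sub>1 + \<dots> + x\<^sup>*\<^sub>k\<close>, so \<open>xh \<in> E\<close> by full
  symmetry. Conversely, an element of \<open>E\<close> not tending to 0 forces \<open>one_seq \<in> E\<close>, and the averages of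
  \<open>one_seq\<close> under the right shift tend to 0 coordinatewise but not uniformly.\<close>

lemma linf_iff: "x \<in> linf \<longleftrightarrow> (\<exists>B. \<forall>i. \<bar>x i\<bar> \<le> B)"
  unfolding linf_def bounded_iff by auto

lemma linfI: "(\<And>i. \<bar>x i\<bar> \<le> B) \<Longrightarrow> x \<in> linf"
  unfolding linf_iff by auto

lemma bdd_above_abs_linf: "x \<in> linf \<Longrightarrow> bdd_above ((\<lambda>i. \<bar>x i\<bar>) ` A)"
  unfolding linf_iff bdd_above_def by auto

lemma abs_le_sup_norm: "x \<in> linf \<Longrightarrow> \<bar>x i\<bar> \<le> sup_norm x"
  unfolding sup_norm_def using bdd_above_abs_linf by (intro cSUP_upper) auto

lemma sup_norm_le: "(\<And>i. \<bar>x i\<bar> \<le> B) \<Longrightarrow> sup_norm x \<le> B"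
  unfolding sup_norm_def by (intro cSUP_least) auto

lemma sup_norm_nonneg: "x \<in> linf \<Longrightarrow> 0 \<le> sup_norm x"
  using abs_le_sup_norm[of x 0] by linarith

lemma linf_add: "x \<in> linf \<Longrightarrow> y \<in> linf \<Longrightarrow> (\<lambda>n. x n + y n) \<in> linf"
  unfolding linf_iff by (metis abs_triangle_ineq add_mono order_trans)

lemma linf_scale: "x \<in> linf \<Longrightarrow> (\<lambda>n. c * x n) \<in> linf"
proof -
  assume "x \<in> linf"
  then obtain A where "\<forall>i. \<bar>x i\<bar> \<le> A" unfolding linf_iff by auto
  then show ?thesis by (intro linfI[of _ "\<bar>c\<bar> * A"]) (simp add: abs_mult mult_left_mono)
qed

lemma linf_diff: "x \<in> linf \<Longrightarrow> y \<in> linf \<Longrightarrow> (\<lambda>n. x n - y n) \<in> linf"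
  using linf_add[of x "\<lambda>n. (-1) * y n"] linf_scale[of y "-1"] by simp

lemma linf_sum:
  "finite S \<Longrightarrow> (\<And>k. k \<in> S \<Longrightarrow> f k \<in> linf) \<Longrightarrow> (\<lambda>n. \<Sum>k\<in>S. f k n) \<in> linf"
  by (induction S rule: finite_induct) (auto intro: linfI[of _ 0] linf_add)

lemma one_seq_linf: "one_seq \<in> linf"
  unfolding one_seq_def by (rule linfI[of _ 1]) simp

lemma sum_abs_le_l1_norm: "x \<in> l1 \<Longrightarrow> finite F \<Longrightarrow> (\<Sum>i\<in>F. \<bar>x i\<bar>) \<le> l1_norm x"
  unfolding l1_def l1_norm_def by (intro sum_le_suminf) auto

lemma abs_le_l1_norm: "x \<in> l1 \<Longrightarrow> \<bar>x i\<bar> \<le> l1_norm x"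
  using sum_abs_le_l1_norm[of x "{i}"] by simp

lemma l1_norm_nonneg: "x \<in> l1 \<Longrightarrow> 0 \<le> l1_norm x"
  unfolding l1_norm_def l1_def by (auto intro: suminf_nonneg)

lemma l1_imp_linf: "x \<in> l1 \<Longrightarrow> x \<in> linf"
  using abs_le_l1_norm by (intro linfI)

lemma l1_add:
  assumes "x \<in> l1" "y \<in> l1"
  shows "(\<lambda>n. x n + y n) \<in> l1 \<and> l1_norm (\<lambda>n. x n + y n) \<le> l1_norm x + l1_norm y"
proof -
  have s: "summable (\<lambda>n. \<bar>x n\<bar> + \<bar>y n\<bar>)"
    using assms unfolding l1_def by (intro summable_add) auto
  have s2: "summable (\<lambda>n. \<bar>x n + y n\<bar>)"
    by (rule summable_comparison_test'[OF s, of 0]) auto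
  have "(\<Sum>n. \<bar>x n + y n\<bar>) \<le> (\<Sum>n. \<bar>x n\<bar> + \<bar>y n\<bar>)"
    using s s2 by (intro suminf_le) auto
  also have "\<dots> = l1_norm x + l1_norm y"
    using assms unfolding l1_def l1_norm_def by (intro suminf_add[symmetric]) auto
  finally show ?thesis using s2 unfolding l1_def l1_norm_def by auto
qed

lemma l1_scale: "x \<in> l1 \<Longrightarrow> (\<lambda>n. c * x n) \<in> l1 \<and> l1_norm (\<lambda>n. c * x n) = \<bar>c\<bar> * l1_norm x"
  unfolding l1_def l1_norm_def by (auto simp: abs_mult intro: summable_mult suminf_mult)

lemma l1_diff: "x \<in> l1 \<Longrightarrow> y \<in> l1 \<Longrightarrow> (\<lambda>j. x j - y j) \<in> l1"
  using l1_add[of x "\<lambda>j. (-1) * y j"] l1_scale[of y "-1"] by simp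

lemma l1_sum:
  assumes "finite S" "\<And>k. k \<in> S \<Longrightarrow> f k \<in> l1"
  shows "(\<lambda>n. \<Sum>k\<in>S. f k n) \<in> l1 \<and> l1_norm (\<lambda>n. \<Sum>k\<in>S. f k n) \<le> (\<Sum>k\<in>S. l1_norm (f k))"
  using assms
proof (induction S rule: finite_induct)
  case empty
  then show ?case by (simp add: l1_def l1_norm_def)
next
  case (insert a S)
  then show ?case using l1_add[of "f a" "\<lambda>n. \<Sum>k\<in>S. f k n"] by force
qed

lemma finite_support_l1:
  "finite S \<Longrightarrow> (\<And>i. i \<notin> S \<Longrightarrow> x i = 0) \<Longrightarrow> x \<in> l1 \<and> l1_norm x = (\<Sum>i\<in>S. \<bar>x i\<bar>)"
  unfolding l1_def l1_norm_def by (auto intro!: summable_finite suminf_finite)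

lemma dunford_schwartz_linf: "dunford_schwartz T \<Longrightarrow> x \<in> linf \<Longrightarrow> T x \<in> linf"
  unfolding dunford_schwartz_def linear_on_linf_def by auto

lemma dunford_schwartz_add:
  "dunford_schwartz T \<Longrightarrow> x \<in> linf \<Longrightarrow> y \<in> linf \<Longrightarrow> T (\<lambda>n. x n + y n) = (\<lambda>n. T x n + T y n)"
  unfolding dunford_schwartz_def linear_on_linf_def by auto

lemma dunford_schwartz_scale:
  "dunford_schwartz T \<Longrightarrow> x \<in> linf \<Longrightarrow> T (\<lambda>n. c * x n) = (\<lambda>n. c * T x n)"
  unfolding dunford_schwartz_def linear_on_linf_def by auto

lemma dunford_schwartz_l1:
  "dunford_schwartz T \<Longrightarrow> x \<in> l1 \<Longrightarrow> T x \<in> l1 \<and> l1_norm (T x) \<le> l1_norm x"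
  unfolding dunford_schwartz_def by auto

lemma dunford_schwartz_sup_norm:
  "dunford_schwartz T \<Longrightarrow> x \<in> linf \<Longrightarrow> sup_norm (T x) \<le> sup_norm x"
  unfolding dunford_schwartz_def by auto

lemma abs_dunford_schwartz_le: "dunford_schwartz T \<Longrightarrow> x \<in> linf \<Longrightarrow> \<bar>T x i\<bar> \<le> sup_norm x"
  using abs_le_sup_norm[OF dunford_schwartz_linf] dunford_schwartz_sup_norm by (meson order_trans)

lemma dunford_schwartz_diff:
  "dunford_schwartz T \<Longrightarrow> x \<in> linf \<Longrightarrow> y \<in> linf \<Longrightarrow> T (\<lambda>n. x n - y n) = (\<lambda>n. T x n - T y n)"
  using dunford_schwartz_add[of T x "\<lambda>n. (-1) * y n"] dunford_schwartz_scale[of T y "-1"]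
    linf_scale[of y "-1"] by simp

lemma dunford_schwartz_sum:
  assumes T: "dunford_schwartz T"
  shows "finite S \<Longrightarrow> (\<And>k. k \<in> S \<Longrightarrow> f k \<in> linf) \<Longrightarrow>
    T (\<lambda>n. \<Sum>k\<in>S. f k n) = (\<lambda>n. \<Sum>k\<in>S. T (f k) n)"
proof (induction S rule: finite_induct)
  case empty
  show ?case using dunford_schwartz_scale[OF T linfI[of "\<lambda>_. 0" 0], of 0] by simp
next
  case (insert a S)
  then show ?case by (simp add: dunford_schwartz_add[OF T] linf_sum)
qed

lemma dunford_schwartz_id: "dunford_schwartz id"
  unfolding dunford_schwartz_def linear_on_linf_def by auto

lemma dunford_schwartz_comp:
  "dunford_schwartz S \<Longrightarrow> dunford_schwartz T \<Longrightarrow> dunford_schwartz (S \<circ> T)"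
  unfolding dunford_schwartz_def linear_on_linf_def
  by (simp add: l1_imp_linf) (meson order_trans l1_imp_linf)

lemma dunford_schwartz_funpow: "dunford_schwartz T \<Longrightarrow> dunford_schwartz (T ^^ k)"
  by (induction k) (auto simp: dunford_schwartz_id intro: dunford_schwartz_comp)

lemma dunford_schwartz_sub_convex_comb:
  assumes S: "finite S" and T: "\<And>k. k \<in> S \<Longrightarrow> dunford_schwartz (T k)"
    and c: "\<And>k. k \<in> S \<Longrightarrow> 0 \<le> c k" "(\<Sum>k\<in>S. c k) \<le> 1"
  shows "dunford_schwartz (\<lambda>x n. \<Sum>k\<in>S. c k * T k x n)"
proof -
  have "(\<lambda>n. \<Sum>k\<in>S. c k * T k x n) \<in> linf" if "x \<in> linf" for x
    using S T that by (auto intro!: linf_sum linf_scale dunford_schwartz_linf[of "T _"])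
  moreover have "(\<lambda>n. \<Sum>k\<in>S. c k * T k (\<lambda>i. x i + y i) n) =
      (\<lambda>n. (\<Sum>k\<in>S. c k * T k x n) + (\<Sum>k\<in>S. c k * T k y n))"
    if "x \<in> linf" "y \<in> linf" for x y
    using T that by (simp add: dunford_schwartz_add sum.distrib distrib_left)
  moreover have "(\<lambda>n. \<Sum>k\<in>S. c k * T k (\<lambda>i. a * x i) n) = (\<lambda>n. a * (\<Sum>k\<in>S. c k * T k x n))"
    if "x \<in> linf" for x a
    using T that by (simp add: dunford_schwartz_scale sum_distrib_left mult.left_commute)
  ultimately have "linear_on_linf (\<lambda>x n. \<Sum>k\<in>S. c k * T k x n)"
    unfolding linear_on_linf_def by blast
  moreover have "(\<lambda>n. \<Sum>k\<in>S. c k * T k x n) \<in> l1 \<and> l1_norm (\<lambda>n. \<Sum>k\<in>S. c k * T k x n) \<le> l1_norm x"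
    if x: "x \<in> l1" for x
  proof -
    have l1: "\<And>k. k \<in> S \<Longrightarrow> (\<lambda>n. c k * T k x n) \<in> l1 \<and> l1_norm (\<lambda>n. c k * T k x n) \<le> c k * l1_norm x"
      using T c x l1_scale dunford_schwartz_l1 by (simp add: mult_left_mono)
    then have "(\<Sum>k\<in>S. l1_norm (\<lambda>n. c k * T k x n)) \<le> (\<Sum>k\<in>S. c k) * l1_norm x"
      by (simp add: sum_mono sum_distrib_right)
    also have "\<dots> \<le> l1_norm x"
      using mult_right_mono[OF c(2) l1_norm_nonneg[OF x]] by simp
    finally show ?thesis using l1_sum[OF S, of "\<lambda>k n. c k * T k x n"] l1 by auto
  qed
  moreover have "sup_norm (\<lambda>n. \<Sum>k\<in>S. c k * T k x n) \<le> sup_norm x" if x: "x \<in> linf" for x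
  proof (rule sup_norm_le)
    fix n
    have "\<bar>\<Sum>k\<in>S. c k * T k x n\<bar> \<le> (\<Sum>k\<in>S. c k * sup_norm x)"
    proof (rule order_trans[OF sum_abs], rule sum_mono)
      fix k assume "k \<in> S"
      then show "\<bar>c k * T k x n\<bar> \<le> c k * sup_norm x"
        using T c x by (simp add: abs_mult abs_dunford_schwartz_le mult_left_mono)
    qed
    also have "\<dots> \<le> sup_norm x"
      using mult_right_mono[OF c(2) sup_norm_nonneg[OF x]] by (simp add: sum_distrib_right[symmetric])
    finally show "\<bar>\<Sum>k\<in>S. c k * T k x n\<bar> \<le> sup_norm x" .
  qed
  ultimately show ?thesis unfolding dunford_schwartz_def by blast
qed

lemma dunford_schwartz_ergodic_avg:
  assumes "dunford_schwartz T"
  shows "dunford_schwartz (\<lambda>x. ergodic_avg T x n)"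
proof -
  have "(\<Sum>k<n. 1 / real n) \<le> 1" by simp
  then show ?thesis
    using dunford_schwartz_sub_convex_comb[of "{..<n}" "\<lambda>k. T ^^ k" "\<lambda>_. 1 / real n"]
      dunford_schwartz_funpow[OF assms]
    by (simp add: ergodic_avg_def sum_distrib_left)
qed

section \<open>Dunford--Schwartz operators are contractions of l2\<close>

definition l2 :: "seq set" where
  "l2 = {y. summable (\<lambda>i. (y i)\<^sup>2)}"

definition sq_norm :: "seq \<Rightarrow> real" where
  "sq_norm y = (\<Sum>i. (y i)\<^sup>2)"

definition truncate :: "nat \<Rightarrow> seq \<Rightarrow> seq" where
  "truncate N y = (\<lambda>j. if j < N then y j else 0)"

definition unit_seq :: "nat \<Rightarrow> seq" where
  "unit_seq j = (\<lambda>i. if i = j then 1 else 0)"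

lemma l2_dominated_sum:
  assumes "finite S" "\<And>s. s \<in> S \<Longrightarrow> summable (f s)" "\<And>i. (y i)\<^sup>2 \<le> (\<Sum>s\<in>S. f s i)"
  shows "y \<in> l2 \<and> sq_norm y \<le> (\<Sum>s\<in>S. suminf (f s))"
proof -
  have f: "summable (\<lambda>i. \<Sum>s\<in>S. f s i)" using assms(2) by (intro summable_sum) auto
  have y: "summable (\<lambda>i. (y i)\<^sup>2)"
    by (rule summable_comparison_test'[OF f, of 0]) (use assms(3) in auto)
  have "(\<Sum>i. (y i)\<^sup>2) \<le> (\<Sum>i. \<Sum>s\<in>S. f s i)"
    using assms(3) y f by (rule suminf_le)
  also have "\<dots> = (\<Sum>s\<in>S. suminf (f s))"
    using assms(2) by (rule suminf_sum)
  finally show ?thesis using y unfolding l2_def sq_norm_def by simp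
qed

lemma sq_norm_nonneg: "y \<in> l2 \<Longrightarrow> 0 \<le> sq_norm y"
  unfolding sq_norm_def l2_def by (auto intro: suminf_nonneg)

lemma sq_le_sq_norm: "y \<in> l2 \<Longrightarrow> (y i)\<^sup>2 \<le> sq_norm y"
  unfolding l2_def sq_norm_def using sum_le_suminf[of "\<lambda>i. (y i)\<^sup>2" "{i}"] by auto

lemma l2_summable_scale: "y \<in> l2 \<Longrightarrow> summable (\<lambda>i. c * (y i)\<^sup>2)"
  unfolding l2_def by (auto intro: summable_mult)

lemma suminf_scale_sq: "y \<in> l2 \<Longrightarrow> (\<Sum>i. c * (y i)\<^sup>2) = c * sq_norm y"
  unfolding l2_def sq_norm_def by (auto intro: suminf_mult)

lemma l1_imp_l2:
  assumes "y \<in> l1"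
  shows "y \<in> l2"
proof -
  have "summable (\<lambda>i. l1_norm y * \<bar>y i\<bar>)"
    using assms unfolding l1_def by (simp add: summable_mult)
  moreover have "norm ((y i)\<^sup>2) \<le> l1_norm y * \<bar>y i\<bar>" for i
    using abs_le_l1_norm[OF assms, of i] mult_right_mono[of "\<bar>y i\<bar>" "l1_norm y" "\<bar>y i\<bar>"]
    by (simp add: power2_eq_square)
  ultimately show ?thesis
    unfolding l2_def by (blast intro: summable_comparison_test')
qed

lemma weighted_Cauchy_Schwarz:
  fixes t y :: "'a \<Rightarrow> real"
  shows "(\<Sum>j\<in>S. t j * y j)\<^sup>2 \<le> (\<Sum>j\<in>S. \<bar>t j\<bar>) * (\<Sum>j\<in>S. \<bar>t j\<bar> * (y j)\<^sup>2)"
proof -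
  have split: "t j * y j = sqrt \<bar>t j\<bar> * (sgn (t j) * sqrt \<bar>t j\<bar> * y j)" for j
  proof -
    have "sqrt \<bar>t j\<bar> * (sgn (t j) * sqrt \<bar>t j\<bar> * y j) = sgn (t j) * (sqrt \<bar>t j\<bar> * sqrt \<bar>t j\<bar>) * y j"
      by (simp only: ac_simps)
    then show ?thesis by (simp add: sgn_if)
  qed
  have sq: "(sgn (t j) * sqrt \<bar>t j\<bar> * y j)\<^sup>2 = \<bar>t j\<bar> * (y j)\<^sup>2" for j
    by (cases "t j = 0") (auto simp: power_mult_distrib sgn_if)
  show ?thesis
    using Cauchy_Schwarz_ineq_sum[of "\<lambda>j. sqrt \<bar>t j\<bar>" "\<lambda>j. sgn (t j) * sqrt \<bar>t j\<bar> * y j" S]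
    unfolding split[symmetric] sq real_sqrt_pow2[OF abs_ge_zero] .
qed

lemma unit_seq_linf: "unit_seq j \<in> linf"
  unfolding unit_seq_def by (intro linfI[of _ 1]) auto

lemma unit_seq_l1: "unit_seq j \<in> l1 \<and> l1_norm (unit_seq j) = 1"
  using finite_support_l1[of "{j}" "unit_seq j"] unfolding unit_seq_def by auto

lemma truncate_l1: "truncate N y \<in> l1"
  using finite_support_l1[of "{..<N}" "truncate N y"] unfolding truncate_def by auto

lemma dunford_schwartz_truncate:
  assumes T: "dunford_schwartz T"
  shows "T (truncate N y) = (\<lambda>i. \<Sum>j<N. y j * T (unit_seq j) i)"
proof -
  have "truncate N y = (\<lambda>i. \<Sum>j\<in>{..<N}. y j * unit_seq j i)"
    unfolding truncate_def unit_seq_def by (auto simp: if_distrib cong: if_cong)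
  then show ?thesis
    using unit_seq_linf by (simp add: dunford_schwartz_sum[OF T] linf_scale dunford_schwartz_scale[OF T])
qed

text \<open>The matrix of a Dunford--Schwartz operator has absolute row sums at most 1 (test it against
  a sign vector in l\<infinity>) and absolute column sums at most 1 (test it against unit vectors in l1),
  so Schur's test bounds it on l2.\<close>

lemma dunford_schwartz_row_sum:
  assumes T: "dunford_schwartz T"
  shows "(\<Sum>j<N. \<bar>T (unit_seq j) i\<bar>) \<le> 1"
proof -
  define s where "s = truncate N (\<lambda>j. sgn (T (unit_seq j) i))"
  have s_bound: "\<bar>s m\<bar> \<le> 1" for m unfolding s_def truncate_def by (auto simp: sgn_if)
  have "T s i = (\<Sum>j<N. \<bar>T (unit_seq j) i\<bar>)"
    unfolding s_def dunford_schwartz_truncate[OF T] by (simp add: abs_sgn mult.commute)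
  moreover have "\<bar>T s i\<bar> \<le> 1"
    using abs_dunford_schwartz_le[OF T linfI[OF s_bound]] sup_norm_le[OF s_bound] by (meson order_trans)
  ultimately show ?thesis by linarith
qed

lemma dunford_schwartz_column_sum:
  assumes T: "dunford_schwartz T"
  shows "(\<Sum>i<M. \<bar>T (unit_seq j) i\<bar>) \<le> 1"
  using sum_abs_le_l1_norm[of "T (unit_seq j)" "{..<M}"] dunford_schwartz_l1[OF T, of "unit_seq j"]
    unit_seq_l1 by auto

lemma dunford_schwartz_truncate_sq_sum:
  assumes T: "dunford_schwartz T"
  shows "(\<Sum>i<M. (T (truncate N y) i)\<^sup>2) \<le> (\<Sum>j<N. (y j)\<^sup>2)"
proof -
  have "(T (truncate N y) i)\<^sup>2 \<le> (\<Sum>j<N. \<bar>T (unit_seq j) i\<bar> * (y j)\<^sup>2)" for i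
  proof -
    have "(T (truncate N y) i)\<^sup>2 \<le> (\<Sum>j<N. \<bar>T (unit_seq j) i\<bar>) * (\<Sum>j<N. \<bar>T (unit_seq j) i\<bar> * (y j)\<^sup>2)"
      unfolding dunford_schwartz_truncate[OF T]
      using weighted_Cauchy_Schwarz[of "\<lambda>j. T (unit_seq j) i" y "{..<N}"] by (simp add: mult.commute)
    also have "\<dots> \<le> (\<Sum>j<N. \<bar>T (unit_seq j) i\<bar> * (y j)\<^sup>2)"
      using dunford_schwartz_row_sum[OF T] by (intro mult_left_le_one_le sum_nonneg) auto
    finally show ?thesis .
  qed
  then have "(\<Sum>i<M. (T (truncate N y) i)\<^sup>2) \<le> (\<Sum>i<M. \<Sum>j<N. \<bar>T (unit_seq j) i\<bar> * (y j)\<^sup>2)"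
    by (intro sum_mono)
  also have "\<dots> = (\<Sum>j<N. (y j)\<^sup>2 * (\<Sum>i<M. \<bar>T (unit_seq j) i\<bar>))"
    by (subst sum.swap) (simp add: sum_distrib_left mult.commute)
  also have "\<dots> \<le> (\<Sum>j<N. (y j)\<^sup>2)"
    using dunford_schwartz_column_sum[OF T] by (intro sum_mono mult_left_le) auto
  finally show ?thesis .
qed

lemma l1_norm_tail_tendsto_0:
  assumes "y \<in> l1"
  shows "(\<lambda>N. l1_norm (\<lambda>j. y j - truncate N y j)) \<longlonglongrightarrow> 0"
proof -
  have y: "summable (\<lambda>j. \<bar>y j\<bar>)" using assms unfolding l1_def by auto
  have tail: "l1_norm (\<lambda>j. y j - truncate N y j) = l1_norm y - (\<Sum>j<N. \<bar>y j\<bar>)" for N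
  proof -
    have "(\<lambda>j. \<bar>y j - truncate N y j\<bar>) = (\<lambda>j. \<bar>y j\<bar> - (if j < N then \<bar>y j\<bar> else 0))"
      unfolding truncate_def by auto
    moreover have head: "summable (\<lambda>j. if j < N then \<bar>y j\<bar> else 0)"
      by (rule summable_finite[of "{..<N}"]) auto
    moreover have "(\<Sum>j. if j < N then \<bar>y j\<bar> else 0) = (\<Sum>j<N. \<bar>y j\<bar>)"
      by (subst suminf_finite[of "{..<N}"]) auto
    ultimately show ?thesis unfolding l1_norm_def using suminf_diff[OF y head] by simp
  qed
  have "(\<lambda>N. l1_norm y - (\<Sum>j<N. \<bar>y j\<bar>)) \<longlonglongrightarrow> l1_norm y - l1_norm y"
    unfolding l1_norm_def using summable_LIMSEQ[OF y] by (intro tendsto_intros)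
  then show ?thesis unfolding tail by simp
qed

lemma dunford_schwartz_truncate_tendsto:
  assumes T: "dunford_schwartz T" and y: "y \<in> l1"
  shows "(\<lambda>N. T (truncate N y) i) \<longlonglongrightarrow> T y i"
proof -
  have "(\<lambda>N. T y i - T (truncate N y) i) \<longlonglongrightarrow> 0"
  proof (rule Lim_null_comparison[OF _ l1_norm_tail_tendsto_0[OF y]], intro always_eventually allI)
    fix N
    have d: "(\<lambda>j. y j - truncate N y j) \<in> l1" using l1_diff[OF y truncate_l1] .
    have "T y i - T (truncate N y) i = T (\<lambda>j. y j - truncate N y j) i"
      using dunford_schwartz_diff[OF T] y truncate_l1 l1_imp_linf by simp
    then show "norm (T y i - T (truncate N y) i) \<le> l1_norm (\<lambda>j. y j - truncate N y j)"
      using abs_le_l1_norm[of "T (\<lambda>j. y j - truncate N y j)" i] dunford_schwartz_l1[OF T d] by simp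
  qed
  then have "(\<lambda>N. T y i - (T y i - T (truncate N y) i)) \<longlonglongrightarrow> T y i - 0"
    by (intro tendsto_intros)
  then show ?thesis by simp
qed

lemma dunford_schwartz_sq_norm_le:
  assumes T: "dunford_schwartz T" and y: "y \<in> l1"
  shows "T y \<in> l2 \<and> sq_norm (T y) \<le> sq_norm y"
proof -
  have sy: "summable (\<lambda>j. (y j)\<^sup>2)" using l1_imp_l2[OF y] unfolding l2_def by auto
  have partial: "(\<Sum>i<M. (T y i)\<^sup>2) \<le> sq_norm y" for M
  proof (rule LIMSEQ_le_const2)
    show "(\<lambda>N. \<Sum>i<M. (T (truncate N y) i)\<^sup>2) \<longlonglongrightarrow> (\<Sum>i<M. (T y i)\<^sup>2)"
      using dunford_schwartz_truncate_tendsto[OF T y] by (intro tendsto_intros)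
    show "\<exists>N0. \<forall>N\<ge>N0. (\<Sum>i<M. (T (truncate N y) i)\<^sup>2) \<le> sq_norm y"
    proof (intro exI allI impI)
      fix N
      have "(\<Sum>j<N. (y j)\<^sup>2) \<le> sq_norm y"
        unfolding sq_norm_def by (rule sum_le_suminf[OF sy]) auto
      then show "(\<Sum>i<M. (T (truncate N y) i)\<^sup>2) \<le> sq_norm y"
        using dunford_schwartz_truncate_sq_sum[OF T, where M=M and N=N and y=y] by linarith
    qed
  qed
  have "summable (\<lambda>i. (T y i)\<^sup>2)"
    by (rule summableI_nonneg_bounded[OF _ partial]) simp
  then show ?thesis
    unfolding l2_def sq_norm_def using suminf_le_const partial[unfolded sq_norm_def] by auto
qed

section \<open>Mean ergodic theorem in l2 for vectors in l1\<close>

lemma sq_norm_add_le: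
  assumes "a \<in> l2" "b \<in> l2" "\<eta> > 0"
  shows "sq_norm (\<lambda>i. a i + b i) \<le> (1 + \<eta>) * sq_norm a + (1 + 1 / \<eta>) * sq_norm b"
proof -
  define f where "f = (\<lambda>s. if s then (\<lambda>i. (1 + \<eta>) * (a i)\<^sup>2) else (\<lambda>i. (1 + 1 / \<eta>) * (b i)\<^sup>2))"
  have "(a i + b i)\<^sup>2 \<le> (\<Sum>s\<in>{True, False}. f s i)" for i
  proof -
    have "0 \<le> (\<eta> * a i - b i)\<^sup>2 / \<eta>" using assms(3) by simp
    also have "\<dots> = (1 + \<eta>) * (a i)\<^sup>2 + (1 + 1 / \<eta>) * (b i)\<^sup>2 - (a i + b i)\<^sup>2"
      using assms(3) by (simp add: power2_eq_square field_simps)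
    finally show ?thesis unfolding f_def by simp
  qed
  moreover have "\<And>s. s \<in> {True, False} \<Longrightarrow> summable (f s)"
    unfolding f_def using assms l2_summable_scale by auto
  ultimately show ?thesis
    using l2_dominated_sum[of "{True, False}" f "\<lambda>i. a i + b i"] assms
    unfolding f_def by (auto simp: suminf_scale_sq)
qed

lemma sq_norm_parallelogram:
  assumes "a \<in> l2" "b \<in> l2"
  shows "sq_norm (\<lambda>i. a i - b i) = 2 * sq_norm a + 2 * sq_norm b - 4 * sq_norm (\<lambda>i. (a i + b i) / 2)"
proof -
  have mid: "norm (((a i + b i) / 2)\<^sup>2) \<le> (a i)\<^sup>2 + (b i)\<^sup>2" for i
  proof -
    have "(a i + b i)\<^sup>2 \<le> 2 * ((a i)\<^sup>2 + (b i)\<^sup>2)"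
      using zero_le_square[of "a i - b i"] by (simp add: power2_eq_square algebra_simps)
    then show ?thesis by (simp add: power_divide) (smt (verit) zero_le_power2)
  qed
  have "summable (\<lambda>i. (a i)\<^sup>2 + (b i)\<^sup>2)"
    using assms unfolding l2_def by (intro summable_add) auto
  then have mid_l2: "(\<lambda>i. (a i + b i) / 2) \<in> l2"
    unfolding l2_def using mid by (blast intro: summable_comparison_test')
  then have s: "summable (\<lambda>i. 2 * (a i)\<^sup>2)" "summable (\<lambda>i. 2 * (b i)\<^sup>2)"
      "summable (\<lambda>i. 4 * ((a i + b i) / 2)\<^sup>2)"
    using assms l2_summable_scale by auto
  have "(\<lambda>i. (a i - b i)\<^sup>2) = (\<lambda>i. 2 * (a i)\<^sup>2 + 2 * (b i)\<^sup>2 - 4 * ((a i + b i) / 2)\<^sup>2)"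
    by (auto simp: power2_eq_square field_simps)
  then have "sq_norm (\<lambda>i. a i - b i) = (\<Sum>i. 2 * (a i)\<^sup>2) + (\<Sum>i. 2 * (b i)\<^sup>2) - (\<Sum>i. 4 * ((a i + b i) / 2)\<^sup>2)"
    unfolding sq_norm_def using suminf_diff[OF summable_add[OF s(1,2)] s(3)] suminf_add[OF s(1,2)] by simp
  then show ?thesis
    using suminf_scale_sq[OF assms(1)] suminf_scale_sq[OF assms(2)] suminf_scale_sq[OF mid_l2] by simp
qed

lemma sq_sum_le: "(\<Sum>j<k. a j)\<^sup>2 \<le> real k * (\<Sum>j<k. (a j :: real)\<^sup>2)"
  using weighted_Cauchy_Schwarz[of "\<lambda>_. 1" a "{..<k}"] by simp

lemma sum_lessThan_add:
  fixes f :: "nat \<Rightarrow> 'a::comm_monoid_add"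
  shows "(\<Sum>j<n + k. f j) = (\<Sum>j<n. f j) + (\<Sum>j<k. f (n + j))"
  by (induction k) (auto simp: add.assoc)

locale l1_orbit =
  fixes T :: "seq \<Rightarrow> seq" and x :: seq
  assumes T: "dunford_schwartz T" and x: "x \<in> l1"
begin

definition orbit :: "nat \<Rightarrow> seq" where
  "orbit k = (T ^^ k) x"

lemma orbit_l1: "orbit k \<in> l1"
  unfolding orbit_def using dunford_schwartz_l1[OF dunford_schwartz_funpow[OF T] x] by auto

lemma orbit_l2: "orbit k \<in> l2"
  using l1_imp_l2[OF orbit_l1] .

lemma orbit_linf: "orbit k \<in> linf"
  using l1_imp_linf[OF orbit_l1] .

lemma sq_norm_orbit_le: "sq_norm (orbit k) \<le> sq_norm x"
  unfolding orbit_def using dunford_schwartz_sq_norm_le[OF dunford_schwartz_funpow[OF T] x] by auto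

lemma ergodic_avg_orbit: "ergodic_avg T (orbit k) n i = (\<Sum>j<n. orbit (j + k) i) / real n"
  unfolding ergodic_avg_def orbit_def by (simp add: funpow_add)

lemma ergodic_avg_diff_orbit:
  "ergodic_avg T x n i - ergodic_avg T (orbit k) n i = ((\<Sum>j<k. orbit j i) - (\<Sum>j<k. orbit (n + j) i)) / real n"
proof -
  have "(\<Sum>j<n. orbit j i) + (\<Sum>j<k. orbit (n + j) i) = (\<Sum>j<k. orbit j i) + (\<Sum>j<n. orbit (k + j) i)"
    using sum_lessThan_add[of "\<lambda>j. orbit j i" n k] sum_lessThan_add[of "\<lambda>j. orbit j i" k n]
    by (simp add: add.commute)
  then have "(\<Sum>j<n. orbit j i) - (\<Sum>j<n. orbit (j + k) i) = (\<Sum>j<k. orbit j i) - (\<Sum>j<k. orbit (n + j) i)"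
    by (simp add: add.commute)
  then show ?thesis
    using ergodic_avg_orbit[of 0 n i] ergodic_avg_orbit[of k n i]
    by (simp add: orbit_def diff_divide_distrib[symmetric])
qed

lemma sq_norm_ergodic_avg_diff_orbit_le:
  assumes n: "n > 0"
  shows "(\<lambda>i. ergodic_avg T x n i - ergodic_avg T (orbit k) n i) \<in> l2 \<and>
    sq_norm (\<lambda>i. ergodic_avg T x n i - ergodic_avg T (orbit k) n i) \<le> 4 * real k ^ 2 * sq_norm x / real n ^ 2"
proof -
  define f where "f = (\<lambda>j i. 2 * real k / real n ^ 2 * ((orbit j i)\<^sup>2 + (orbit (n + j) i)\<^sup>2))"
  have f: "summable (f j)" for j
    unfolding f_def using orbit_l2 unfolding l2_def by (intro summable_mult summable_add) auto
  have "(ergodic_avg T x n i - ergodic_avg T (orbit k) n i)\<^sup>2 \<le> (\<Sum>j\<in>{..<k}. f j i)" for i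
  proof -
    define P where "P = (\<Sum>j<k. orbit j i)"
    define R where "R = (\<Sum>j<k. orbit (n + j) i)"
    have "(ergodic_avg T x n i - ergodic_avg T (orbit k) n i)\<^sup>2 = (P - R)\<^sup>2 / real n ^ 2"
      unfolding ergodic_avg_diff_orbit P_def R_def by (simp add: power_divide)
    also have "\<dots> \<le> (2 * P\<^sup>2 + 2 * R\<^sup>2) / real n ^ 2"
      using zero_le_square[of "P + R"]
      by (intro divide_right_mono) (auto simp: power2_eq_square algebra_simps)
    also have "\<dots> \<le> (2 * (real k * (\<Sum>j<k. (orbit j i)\<^sup>2)) + 2 * (real k * (\<Sum>j<k. (orbit (n + j) i)\<^sup>2))) / real n ^ 2"
      unfolding P_def R_def by (intro divide_right_mono add_mono mult_left_mono sq_sum_le) auto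
    also have "\<dots> = (\<Sum>j\<in>{..<k}. f j i)"
      unfolding f_def by (simp add: sum_distrib_left sum.distrib algebra_simps add_divide_distrib sum_divide_distrib)
    finally show ?thesis .
  qed
  then have dominated: "(\<lambda>i. ergodic_avg T x n i - ergodic_avg T (orbit k) n i) \<in> l2 \<and>
      sq_norm (\<lambda>i. ergodic_avg T x n i - ergodic_avg T (orbit k) n i) \<le> (\<Sum>j\<in>{..<k}. suminf (f j))"
    using f by (intro l2_dominated_sum) auto
  have "suminf (f j) \<le> 4 * real k * sq_norm x / real n ^ 2" for j
  proof -
    have "suminf (f j) = 2 * real k / real n ^ 2 * (sq_norm (orbit j) + sq_norm (orbit (n + j)))"
      unfolding f_def sq_norm_def using orbit_l2 unfolding l2_def
      by (subst suminf_mult) (auto intro: summable_add simp: suminf_add)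
    also have "\<dots> \<le> 2 * real k / real n ^ 2 * (sq_norm x + sq_norm x)"
      using sq_norm_orbit_le by (intro mult_left_mono add_mono) auto
    finally show ?thesis by simp
  qed
  then have "(\<Sum>j\<in>{..<k}. suminf (f j)) \<le> (\<Sum>j\<in>{..<k}. 4 * real k * sq_norm x / real n ^ 2)"
    by (rule sum_mono)
  also have "\<dots> = 4 * real k ^ 2 * sq_norm x / real n ^ 2"
    by (simp add: power2_eq_square)
  finally show ?thesis using dominated by linarith
qed

definition orbit_hull :: "seq set" where
  "orbit_hull = {z. \<exists>K c. (\<forall>k. 0 \<le> c k) \<and> (\<Sum>k<K. c k) = 1 \<and> z = (\<lambda>i. \<Sum>k<K. c k * orbit k i)}"

lemma orbit_hull_l1: "z \<in> orbit_hull \<Longrightarrow> z \<in> l1"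
  unfolding orbit_hull_def using l1_sum[of _ "\<lambda>k i. _ k * orbit k i"] l1_scale[OF orbit_l1] by auto

lemma in_orbit_hull: "x \<in> orbit_hull"
  unfolding orbit_hull_def by (intro CollectI exI[of _ 1] exI[of _ "\<lambda>_. 1"]) (simp add: orbit_def)

lemma ergodic_avg_midpoint_in_orbit_hull:
  assumes "n > 0" "m > 0"
  shows "(\<lambda>i. (ergodic_avg T x n i + ergodic_avg T x m i) / 2) \<in> orbit_hull"
proof -
  define K where "K = max n m"
  define c where "c = (\<lambda>k. ((if k < n then 1 / real n else 0) + (if k < m then 1 / real m else 0)) / 2)"
  have restrict: "(\<Sum>k<K. if k < p then f k else 0) = (\<Sum>k<p. f k)" if "p \<le> K" for p and f :: "nat \<Rightarrow> real"
  proof -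
    have "{..<K} \<inter> {k. k < p} = {..<p}" using that by auto
    then show ?thesis by (simp add: sum.If_cases)
  qed
  have K: "n \<le> K" "m \<le> K" unfolding K_def by auto
  have "(\<Sum>k<K. c k) = ((\<Sum>k<K. if k < n then 1 / real n else 0) + (\<Sum>k<K. if k < m then 1 / real m else 0)) / 2"
    unfolding c_def by (simp add: sum.distrib sum_divide_distrib[symmetric])
  also have "\<dots> = 1"
    using assms by (simp add: restrict[OF K(1)] restrict[OF K(2)])
  finally have "(\<Sum>k<K. c k) = 1" .
  moreover have "(ergodic_avg T x n i + ergodic_avg T x m i) / 2 = (\<Sum>k<K. c k * orbit k i)" for i
  proof -
    have "(\<Sum>k<K. c k * orbit k i) =
        (\<Sum>k<K. ((if k < n then orbit k i / real n else 0) + (if k < m then orbit k i / real m else 0)) / 2)"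
      unfolding c_def by (intro sum.cong) (auto simp: field_simps)
    also have "\<dots> =
        ((\<Sum>k<K. if k < n then orbit k i / real n else 0) + (\<Sum>k<K. if k < m then orbit k i / real m else 0)) / 2"
      by (simp add: sum.distrib sum_divide_distrib[symmetric])
    also have "\<dots> = ((\<Sum>k<n. orbit k i / real n) + (\<Sum>k<m. orbit k i / real m)) / 2"
      by (simp only: restrict[OF K(1)] restrict[OF K(2)])
    finally show ?thesis
      unfolding ergodic_avg_def orbit_def by (simp add: sum_divide_distrib[symmetric])
  qed
  moreover have "\<forall>k. 0 \<le> c k" unfolding c_def by auto
  ultimately show ?thesis unfolding orbit_hull_def by blast
qed

lemma sq_norm_ergodic_avg_diff_hull_le:
  assumes n: "n > 0" and c: "\<forall>k. 0 \<le> c k" "(\<Sum>k<K. c k) = 1"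
  shows "sq_norm (\<lambda>i. ergodic_avg T x n i - ergodic_avg T (\<lambda>i. \<Sum>k<K. c k * orbit k i) n i)
    \<le> 4 * real K ^ 2 * sq_norm x / real n ^ 2"
proof -
  define D where "D = (\<lambda>k i. ergodic_avg T x n i - ergodic_avg T (orbit k) n i)"
  have A: "dunford_schwartz (\<lambda>y. ergodic_avg T y n)"
    using dunford_schwartz_ergodic_avg[OF T] .
  have "ergodic_avg T (\<lambda>i. \<Sum>k\<in>{..<K}. c k * orbit k i) n = (\<lambda>i. \<Sum>k<K. c k * ergodic_avg T (orbit k) n i)"
    using orbit_linf by (simp add: dunford_schwartz_sum[OF A] linf_scale dunford_schwartz_scale[OF A])
  then have diff: "ergodic_avg T x n i - ergodic_avg T (\<lambda>i. \<Sum>k<K. c k * orbit k i) n i = (\<Sum>k<K. c k * D k i)" for i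
    using c(2) by (simp add: D_def right_diff_distrib sum_subtractf sum_distrib_right[symmetric])
  define f where "f = (\<lambda>k i. c k * (D k i)\<^sup>2)"
  have D: "D k \<in> l2 \<and> sq_norm (D k) \<le> 4 * real k ^ 2 * sq_norm x / real n ^ 2" for k
    unfolding D_def using sq_norm_ergodic_avg_diff_orbit_le[OF n] .
  have "(\<Sum>k<K. c k * D k i)\<^sup>2 \<le> (\<Sum>k\<in>{..<K}. f k i)" for i
    unfolding f_def using weighted_Cauchy_Schwarz[of c "\<lambda>k. D k i" "{..<K}"] c by simp
  then have "sq_norm (\<lambda>i. ergodic_avg T x n i - ergodic_avg T (\<lambda>i. \<Sum>k<K. c k * orbit k i) n i)
      \<le> (\<Sum>k\<in>{..<K}. suminf (f k))"
    unfolding diff using D l2_summable_scale unfolding f_def by (intro conjunct2[OF l2_dominated_sum]) auto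
  also have "\<dots> \<le> (\<Sum>k\<in>{..<K}. c k * (4 * real K ^ 2 * sq_norm x / real n ^ 2))"
  proof (intro sum_mono)
    fix k assume "k \<in> {..<K}"
    then have "real k ^ 2 \<le> real K ^ 2" by simp
    then have "4 * real k ^ 2 * sq_norm x / real n ^ 2 \<le> 4 * real K ^ 2 * sq_norm x / real n ^ 2"
      using sq_norm_nonneg[OF l1_imp_l2[OF x]]
      by (intro divide_right_mono mult_right_mono) auto
    then show "suminf (f k) \<le> c k * (4 * real K ^ 2 * sq_norm x / real n ^ 2)"
      unfolding f_def using suminf_scale_sq[of "D k" "c k"] D[of k] c(1)
      by (metis (no_types, lifting) mult_left_mono order_trans)
  qed
  also have "\<dots> = 4 * real K ^ 2 * sq_norm x / real n ^ 2"
    unfolding sum_distrib_right[symmetric] c(2) by simp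
  finally show ?thesis .
qed

lemma sq_norm_ergodic_avg_eventually_le:
  assumes z: "z \<in> orbit_hull" and s: "s > 0"
  shows "\<exists>N>0. \<forall>n\<ge>N. sq_norm (ergodic_avg T x n) \<le> (1 + s) * sq_norm z + (1 + 1 / s) * s\<^sup>2"
proof -
  obtain K c where c: "\<forall>k. 0 \<le> c k" "(\<Sum>k<K. c k) = 1" and z_eq: "z = (\<lambda>i. \<Sum>k<K. c k * orbit k i)"
    using z unfolding orbit_hull_def by auto
  obtain N where N: "4 * real K ^ 2 * sq_norm x / s\<^sup>2 < real N" "N > 0"
    using reals_Archimedean2 by (metis gr_zeroI less_trans of_nat_0 of_nat_less_iff)
  have "sq_norm (ergodic_avg T x n) \<le> (1 + s) * sq_norm z + (1 + 1 / s) * s\<^sup>2" if n: "n \<ge> N" for n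
  proof -
    have n0: "n > 0" using n N(2) by simp
    have "4 * real K ^ 2 * sq_norm x < s\<^sup>2 * real N" using N s by (simp add: field_simps)
    also have "\<dots> \<le> s\<^sup>2 * real n ^ 2"
      using n n0 by (intro mult_left_mono) (auto simp: power2_eq_square intro: order_trans[of _ "real n"])
    finally have small: "4 * real K ^ 2 * sq_norm x / real n ^ 2 \<le> s\<^sup>2"
      using n0 by (simp add: field_simps)
    define a where "a = ergodic_avg T z n"
    define b where "b = (\<lambda>i. ergodic_avg T x n i - ergodic_avg T z n i)"
    have avg_l1: "ergodic_avg T y n \<in> l1" if "y \<in> l1" for y
      using dunford_schwartz_l1[OF dunford_schwartz_ergodic_avg[OF T] that] by blast
    have a: "a \<in> l2" "sq_norm a \<le> sq_norm z"
      unfolding a_def using dunford_schwartz_sq_norm_le[OF dunford_schwartz_ergodic_avg[OF T] orbit_hull_l1[OF z]]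
      by auto
    have b: "b \<in> l2"
      unfolding b_def using l1_imp_l2[OF l1_diff[OF avg_l1[OF x] avg_l1[OF orbit_hull_l1[OF z]]]] .
    have "sq_norm b \<le> s\<^sup>2"
      unfolding b_def z_eq using sq_norm_ergodic_avg_diff_hull_le[OF n0 c] small by linarith
    then have "(1 + s) * sq_norm a + (1 + 1 / s) * sq_norm b \<le> (1 + s) * sq_norm z + (1 + 1 / s) * s\<^sup>2"
      using a(2) s by (intro add_mono mult_left_mono) auto
    then show ?thesis
      using sq_norm_add_le[OF a(1) b s] unfolding a_def b_def by simp
  qed
  then show ?thesis using N(2) by blast
qed

text \<open>Birkhoff's argument: if \<open>d\<close> is the infimum of \<open>sq_norm\<close> on the orbit hull, then the averages
  eventually have \<open>sq_norm\<close> close to \<open>d\<close> while their midpoints stay in the hull, so the parallelogram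
  law forces them to be Cauchy.\<close>

lemma ergodic_avg_sq_norm_Cauchy:
  assumes e: "e > 0"
  shows "\<exists>N. \<forall>n\<ge>N. \<forall>m\<ge>N. sq_norm (\<lambda>i. ergodic_avg T x n i - ergodic_avg T x m i) < e"
proof -
  define d where "d = Inf (sq_norm ` orbit_hull)"
  have bdd: "bdd_below (sq_norm ` orbit_hull)"
    using sq_norm_nonneg[OF l1_imp_l2[OF orbit_hull_l1]] by (auto intro!: bdd_belowI[of _ 0])
  have d0: "0 \<le> d"
    unfolding d_def using in_orbit_hull sq_norm_nonneg[OF l1_imp_l2[OF orbit_hull_l1]]
    by (intro cInf_greatest) auto
  define s where "s = min 1 (e / (8 * (d + 4)))"
  have s: "0 < s" "s \<le> 1" "s \<le> e / (8 * (d + 4))" unfolding s_def using e d0 by auto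
  obtain z where z: "z \<in> orbit_hull" "sq_norm z < d + s"
    using cInf_lessD[of "sq_norm ` orbit_hull" "d + s"] in_orbit_hull s(1) unfolding d_def by auto
  obtain N where N: "N > 0" "\<And>n. n \<ge> N \<Longrightarrow> sq_norm (ergodic_avg T x n) \<le> (1 + s) * sq_norm z + (1 + 1 / s) * s\<^sup>2"
    using sq_norm_ergodic_avg_eventually_le[OF z(1) s(1)] by blast
  have "(1 + s) * sq_norm z \<le> (1 + s) * (d + s)"
    using z(2) s(1) by (intro mult_left_mono) auto
  then have avg: "sq_norm (ergodic_avg T x n) \<le> (1 + s) * (d + s) + (1 + 1 / s) * s\<^sup>2" if "n \<ge> N" for n
    using N(2)[OF that] by linarith
  have "sq_norm (\<lambda>i. ergodic_avg T x n i - ergodic_avg T x m i) < e" if n: "n \<ge> N" and m: "m \<ge> N" for n m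
  proof -
    have l2: "ergodic_avg T x n \<in> l2" "ergodic_avg T x m \<in> l2"
      using l1_imp_l2 dunford_schwartz_l1[OF dunford_schwartz_ergodic_avg[OF T] x] by auto
    have "d \<le> sq_norm (\<lambda>i. (ergodic_avg T x n i + ergodic_avg T x m i) / 2)"
      unfolding d_def using ergodic_avg_midpoint_in_orbit_hull n m N(1) bdd by (intro cInf_lower) auto
    then have "sq_norm (\<lambda>i. ergodic_avg T x n i - ergodic_avg T x m i)
        \<le> 4 * ((1 + s) * (d + s) + (1 + 1 / s) * s\<^sup>2) - 4 * d"
      unfolding sq_norm_parallelogram[OF l2] using avg[OF n] avg[OF m] by simp
    also have "\<dots> = 4 * s * (d + 2 + 2 * s)" using s by (simp add: field_simps power2_eq_square)
    also have "\<dots> \<le> 4 * s * (d + 4)" using s d0 by (intro mult_left_mono) auto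
    also have "\<dots> \<le> e / 2" using s d0 by (simp add: field_simps)
    finally show ?thesis using e by linarith
  qed
  then show ?thesis by blast
qed

end

lemma ergodic_avg_l1_uniformly_Cauchy:
  assumes T: "dunford_schwartz T" and x: "x \<in> l1"
  shows "uniformly_Cauchy_on UNIV (ergodic_avg T x)"
proof (unfold uniformly_Cauchy_on_def dist_real_def, intro allI impI)
  fix e :: real assume e: "e > 0"
  interpret l1_orbit T x using T x by unfold_locales
  obtain N where N: "\<forall>n\<ge>N. \<forall>m\<ge>N. sq_norm (\<lambda>i. ergodic_avg T x n i - ergodic_avg T x m i) < e\<^sup>2"
    using ergodic_avg_sq_norm_Cauchy[of "e\<^sup>2"] e by auto
  have "\<bar>ergodic_avg T x n i - ergodic_avg T x m i\<bar> < e" if "n \<ge> N" "m \<ge> N" for n m i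
  proof -
    have "ergodic_avg T x n \<in> l1" "ergodic_avg T x m \<in> l1"
      using dunford_schwartz_l1[OF dunford_schwartz_ergodic_avg[OF T] x] by blast+
    then have "(\<lambda>i. ergodic_avg T x n i - ergodic_avg T x m i) \<in> l2"
      by (intro l1_imp_l2 l1_diff)
    from sq_le_sq_norm[OF this, of i]
    have "\<bar>ergodic_avg T x n i - ergodic_avg T x m i\<bar>\<^sup>2 < e\<^sup>2"
      using N that by (simp add: order_le_less_trans)
    then show ?thesis using e by (simp add: power2_less_imp_less)
  qed
  then show "\<exists>N. \<forall>i\<in>UNIV. \<forall>n\<ge>N. \<forall>m\<ge>N. \<bar>ergodic_avg T x n i - ergodic_avg T x m i\<bar> < e"
    by blast
qed

section \<open>Uniform convergence of ergodic averages on c0\<close>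

lemma c0_imp_linf: "x \<in> c0 \<Longrightarrow> x \<in> linf"
  unfolding c0_def using convergent_imp_Bseq[of x] by (auto simp: convergent_def Bseq_def intro: linfI)

lemma ergodic_avg_c0_uniformly_Cauchy:
  assumes T: "dunford_schwartz T" and x: "x \<in> c0"
  shows "uniformly_Cauchy_on UNIV (ergodic_avg T x)"
proof (unfold uniformly_Cauchy_on_def dist_real_def, intro allI impI)
  fix e :: real assume e: "e > 0"
  have e3: "e / 3 > 0" using e by simp
  then obtain N0 where "\<forall>i\<ge>N0. norm (x i - 0) < e / 3"
    using x unfolding c0_def LIMSEQ_iff by blast
  then have N0: "\<And>i. i \<ge> N0 \<Longrightarrow> \<bar>x i\<bar> < e / 3" by simp
  define x' where "x' = truncate N0 x"
  have x': "x' \<in> l1" unfolding x'_def by (rule truncate_l1)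
  have "\<bar>x i - x' i\<bar> \<le> e / 3" for i
    using N0[of i] e unfolding x'_def truncate_def by (cases "i < N0") auto
  then have "sup_norm (\<lambda>i. x i - x' i) \<le> e / 3" by (rule sup_norm_le)
  moreover have A: "dunford_schwartz (\<lambda>y. ergodic_avg T y n)" for n
    using dunford_schwartz_ergodic_avg[OF T] .
  ultimately have close: "\<bar>ergodic_avg T x n i - ergodic_avg T x' n i\<bar> \<le> e / 3" for n i
  proof -
    have "ergodic_avg T x n i - ergodic_avg T x' n i = ergodic_avg T (\<lambda>i. x i - x' i) n i"
      using dunford_schwartz_diff[OF A c0_imp_linf[OF x] l1_imp_linf[OF x']] by simp
    also have "\<bar>\<dots>\<bar> \<le> sup_norm (\<lambda>i. x i - x' i)"
      by (rule abs_dunford_schwartz_le[OF A linf_diff[OF c0_imp_linf[OF x] l1_imp_linf[OF x']]])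
    finally show ?thesis using \<open>sup_norm (\<lambda>i. x i - x' i) \<le> e / 3\<close> by linarith
  qed
  obtain N where N: "\<forall>i. \<forall>n\<ge>N. \<forall>m\<ge>N. \<bar>ergodic_avg T x' n i - ergodic_avg T x' m i\<bar> < e / 3"
    using ergodic_avg_l1_uniformly_Cauchy[OF T x'] e3 unfolding uniformly_Cauchy_on_def dist_real_def by blast
  have "\<bar>ergodic_avg T x n i - ergodic_avg T x m i\<bar> < e" if "n \<ge> N" "m \<ge> N" for n m i
  proof -
    have "\<bar>ergodic_avg T x' n i - ergodic_avg T x' m i\<bar> < e / 3" using N that by blast
    then show ?thesis using close[of n i] close[of m i] by arith
  qed
  then show "\<exists>N. \<forall>i\<in>UNIV. \<forall>n\<ge>N. \<forall>m\<ge>N. \<bar>ergodic_avg T x n i - ergodic_avg T x m i\<bar> < e"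
    by blast
qed

lemma uniform_limit_imp_sup_norm_tendsto_0:
  assumes "uniform_limit UNIV f g sequentially"
  shows "(\<lambda>n. sup_norm (\<lambda>m. f n m - g m)) \<longlonglongrightarrow> 0"
proof (rule LIMSEQ_I)
  fix r :: real assume r: "r > 0"
  then obtain N where N: "\<forall>n\<ge>N. \<forall>m. \<bar>f n m - g m\<bar> < r / 2"
    using assms unfolding uniform_limit_sequentially_iff dist_real_def by (metis UNIV_I half_gt_zero)
  have "norm (sup_norm (\<lambda>m. f n m - g m)) < r" if "n \<ge> N" for n
  proof -
    have bound: "\<bar>f n m - g m\<bar> \<le> r / 2" for m using N that by (simp add: less_imp_le)
    have "(\<lambda>m. f n m - g m) \<in> linf" "sup_norm (\<lambda>m. f n m - g m) \<le> r / 2"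
      using linfI[OF bound] sup_norm_le[OF bound] by auto
    then show ?thesis using sup_norm_nonneg r by auto
  qed
  then show "\<exists>N. \<forall>n\<ge>N. norm (sup_norm (\<lambda>m. f n m - g m) - 0) < r" by auto
qed

lemma ergodic_avg_c0_uniform_limit:
  assumes T: "dunford_schwartz T" and x: "x \<in> c0"
  obtains xh where "xh \<in> linf" "uniform_limit UNIV (ergodic_avg T x) xh sequentially"
proof -
  obtain xh where xh: "uniform_limit UNIV (ergodic_avg T x) xh sequentially"
    using Cauchy_uniformly_convergent[OF ergodic_avg_c0_uniformly_Cauchy[OF T x]]
    unfolding uniformly_convergent_on_def by blast
  then obtain N where N: "\<forall>i. \<bar>ergodic_avg T x N i - xh i\<bar> < 1"
    unfolding uniform_limit_sequentially_iff dist_real_def by (metis UNIV_I order_refl zero_less_one)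
  have "\<bar>xh i\<bar> \<le> sup_norm x + 1" for i
    using abs_dunford_schwartz_le[OF dunford_schwartz_ergodic_avg[OF T] c0_imp_linf[OF x], of N i] N[rule_format, of i]
    by linarith
  then show ?thesis using that linfI xh by blast
qed

section \<open>The ergodic limit is majorized\<close>

lemma abs_le_SUP_abs: "y \<in> linf \<Longrightarrow> m \<in> A \<Longrightarrow> \<bar>y m\<bar> \<le> (SUP m\<in>A. \<bar>y m\<bar>)"
  using bdd_above_abs_linf by (intro cSUP_upper) auto

lemma rearr_le_SUP_compl:
  assumes y: "y \<in> linf" and F: "finite F" "card F < n"
  shows "rearr y n \<le> (SUP m\<in>- F. \<bar>y m\<bar>)"
  unfolding rearr_def
proof (rule cInf_lower)
  show "(SUP m\<in>- F. \<bar>y m\<bar>) \<in> {(SUP m\<in>- F. \<bar>y m\<bar>) | F. finite F \<and> card F < n}"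
    using F by blast
  show "bdd_below {(SUP m\<in>- F. \<bar>y m\<bar>) | F. finite F \<and> card F < n}"
  proof (rule bdd_belowI[of _ 0], clarify)
    fix G :: "nat set" assume "finite G"
    then obtain m where "m \<notin> G" using ex_new_if_finite[OF infinite_UNIV_nat] by auto
    then show "0 \<le> (SUP m\<in>- G. \<bar>y m\<bar>)" using abs_le_SUP_abs[OF y, of m "- G"] by auto
  qed
qed

lemma rearr_ge_on_large_set:
  assumes y: "y \<in> linf" and n: "n \<ge> 1" and H: "finite H" "card H \<ge> n" "\<forall>h\<in>H. c \<le> \<bar>y h\<bar>"
  shows "c \<le> rearr y n"
  unfolding rearr_def
proof (rule cInf_greatest)
  show "{(SUP m\<in>- F. \<bar>y m\<bar>) | F. finite F \<and> card F < n} \<noteq> {}"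
    using n by (auto intro!: exI[of _ "{}"])
  fix s assume "s \<in> {(SUP m\<in>- F. \<bar>y m\<bar>) | F. finite F \<and> card F < n}"
  then obtain F where F: "finite F" "card F < n" and s: "s = (SUP m\<in>- F. \<bar>y m\<bar>)" by auto
  have "\<not> H \<subseteq> F"
  proof
    assume "H \<subseteq> F"
    then show False using card_mono[OF F(1), of H] F(2) H(2) by linarith
  qed
  then obtain h where h: "h \<in> H" "h \<notin> F" by auto
  then have "\<bar>y h\<bar> \<le> s" unfolding s using abs_le_SUP_abs[OF y, of h "- F"] by simp
  then show "c \<le> s" using H(3) h(1) by fastforce
qed

lemma sum_rearr_le_sum_abs:
  assumes y: "y \<in> linf" and e: "e > 0"
  shows "\<exists>F. finite F \<and> card F = k \<and> (\<Sum>n=1..k. rearr y n) \<le> (\<Sum>i\<in>F. \<bar>y i\<bar>) + e"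
  using e
proof (induction k arbitrary: e)
  case 0
  then show ?case by (intro exI[of _ "{}"]) auto
next
  case (Suc k)
  obtain F where F: "finite F" "card F = k" "(\<Sum>n=1..k. rearr y n) \<le> (\<Sum>i\<in>F. \<bar>y i\<bar>) + e / 2"
    using Suc.IH[of "e / 2"] Suc.prems by auto
  define S where "S = (SUP m\<in>- F. \<bar>y m\<bar>)"
  have ne: "- F \<noteq> {}" using ex_new_if_finite[OF infinite_UNIV_nat F(1)] by auto
  have "S - e / 2 < S" using Suc.prems by auto
  then obtain m where m: "m \<in> - F" "S - e / 2 < \<bar>y m\<bar>"
    unfolding S_def using less_cSUP_iff[OF ne bdd_above_abs_linf[OF y]] by auto
  have "rearr y (Suc k) \<le> S" unfolding S_def using rearr_le_SUP_compl[OF y F(1)] F(2) by auto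
  then have "(\<Sum>n=1..Suc k. rearr y n) \<le> (\<Sum>i\<in>insert m F. \<bar>y i\<bar>) + e"
    using F m by simp
  moreover have "card (insert m F) = Suc k" using m F by auto
  ultimately show ?case using F(1) by (intro exI[of _ "insert m F"]) auto
qed

lemma c0_ex_max_outside:
  assumes x: "x \<in> c0" and J: "finite J"
  shows "\<exists>m. m \<notin> J \<and> (\<forall>m'. m' \<notin> J \<longrightarrow> \<bar>x m'\<bar> \<le> \<bar>x m\<bar>)"
proof -
  obtain m0 where m0: "m0 \<notin> J" using ex_new_if_finite[OF infinite_UNIV_nat J] by auto
  show ?thesis
  proof (cases "\<forall>m'. m' \<notin> J \<longrightarrow> \<bar>x m'\<bar> \<le> \<bar>x m0\<bar>")
    case True
    then show ?thesis using m0 by blast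
  next
    case False
    then obtain m1 where m1: "m1 \<notin> J" "\<bar>x m1\<bar> > \<bar>x m0\<bar>" by auto
    then have "\<bar>x m1\<bar> > 0" by linarith
    then obtain N where N: "\<forall>i\<ge>N. norm (x i - 0) < \<bar>x m1\<bar>"
      using x unfolding c0_def LIMSEQ_iff by blast
    then have N': "\<bar>x i\<bar> < \<bar>x m1\<bar>" if "i \<ge> N" for i using that by simp
    define S where "S = {m. m < N \<and> m \<notin> J}"
    have "m1 < N" using N'[of m1] by (cases "m1 < N") auto
    then have m1S: "m1 \<in> S" unfolding S_def using m1 by blast
    have fS: "finite S" unfolding S_def by auto
    define M where "M = Max ((\<lambda>m. \<bar>x m\<bar>) ` S)"
    have "M \<in> (\<lambda>m. \<bar>x m\<bar>) ` S" unfolding M_def using fS m1S by (intro Max_in) auto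
    then obtain m where m: "m \<in> S" "\<bar>x m\<bar> = M" by auto
    have ge: "\<bar>x m'\<bar> \<le> M" if "m' \<in> S" for m' unfolding M_def using fS that by (intro Max_ge) auto
    have "\<bar>x m'\<bar> \<le> \<bar>x m\<bar>" if "m' \<notin> J" for m'
    proof (cases "m' < N")
      case True
      then show ?thesis using ge[of m'] m(2) that unfolding S_def by simp
    next
      case False
      then show ?thesis using N'[of m'] ge[OF m1S] m(2) by simp
    qed
    then show ?thesis using m(1) unfolding S_def by blast
  qed
qed

text \<open>For \<open>x \<in> c0\<close> the suprema defining \<open>rearr x\<close> are attained, by the \<open>k\<close> largest entries.\<close>

lemma c0_ex_largest_entries:
  assumes x: "x \<in> c0"
  shows "\<exists>J. finite J \<and> card J = k \<and> (\<forall>i\<in>J. \<forall>m. m \<notin> J \<longrightarrow> \<bar>x m\<bar> \<le> \<bar>x i\<bar>) \<and>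
    (\<Sum>i\<in>J. \<bar>x i\<bar>) \<le> (\<Sum>n=1..k. rearr x n)"
proof (induction k)
  case 0
  then show ?case by (intro exI[of _ "{}"]) auto
next
  case (Suc k)
  then obtain J where J: "finite J" "card J = k" "\<forall>i\<in>J. \<forall>m. m \<notin> J \<longrightarrow> \<bar>x m\<bar> \<le> \<bar>x i\<bar>"
      "(\<Sum>i\<in>J. \<bar>x i\<bar>) \<le> (\<Sum>n=1..k. rearr x n)"
    by auto
  obtain m where m: "m \<notin> J" "\<forall>m'. m' \<notin> J \<longrightarrow> \<bar>x m'\<bar> \<le> \<bar>x m\<bar>"
    using c0_ex_max_outside[OF x J(1)] by auto
  have card: "card (insert m J) = Suc k" using J m by auto
  have "\<bar>x m\<bar> \<le> rearr x (Suc k)"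
    by (rule rearr_ge_on_large_set[OF c0_imp_linf[OF x], of _ "insert m J"]) (use J m card in auto)
  then have "(\<Sum>i\<in>insert m J. \<bar>x i\<bar>) \<le> (\<Sum>n=1..Suc k. rearr x n)" using J m by simp
  moreover have "\<forall>i\<in>insert m J. \<forall>m'. m' \<notin> insert m J \<longrightarrow> \<bar>x m'\<bar> \<le> \<bar>x i\<bar>" using J m by auto
  ultimately show ?case using J card by (intro exI[of _ "insert m J"]) auto
qed

lemma abs_sub_sgn_mult: "0 \<le> t \<Longrightarrow> t \<le> \<bar>v\<bar> \<Longrightarrow> \<bar>v - sgn v * t\<bar> = \<bar>v\<bar> - (t::real)"
  by (cases "v > 0"; cases "v = 0") (auto simp: sgn_if)

lemma c0_split_at_level:
  assumes x: "x \<in> c0" and k: "k > 0"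
  obtains a b t where "x = (\<lambda>i. a i + b i)" "a \<in> l1" "\<And>i. \<bar>b i\<bar> \<le> t"
    "l1_norm a + real k * t \<le> (\<Sum>n=1..k. rearr x n)"
proof -
  obtain J where J: "finite J" "card J = k" "\<forall>i\<in>J. \<forall>m. m \<notin> J \<longrightarrow> \<bar>x m\<bar> \<le> \<bar>x i\<bar>"
      "(\<Sum>i\<in>J. \<bar>x i\<bar>) \<le> (\<Sum>n=1..k. rearr x n)"
    using c0_ex_largest_entries[OF x] by blast
  have "J \<noteq> {}" using J(2) k by auto
  define t where "t = Min ((\<lambda>i. \<bar>x i\<bar>) ` J)"
  have t_le: "t \<le> \<bar>x i\<bar>" if "i \<in> J" for i unfolding t_def using J(1) that by (intro Min_le) auto
  have le_t: "\<bar>x m\<bar> \<le> t" if "m \<notin> J" for m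
    unfolding t_def using J(1) \<open>J \<noteq> {}\<close> J(3) that by (subst Min_ge_iff) auto
  have t0: "0 \<le> t" unfolding t_def using J(1) \<open>J \<noteq> {}\<close> by (subst Min_ge_iff) auto
  define a where "a = (\<lambda>i. if i \<in> J then x i - sgn (x i) * t else 0)"
  define b where "b = (\<lambda>i. if i \<in> J then sgn (x i) * t else x i)"
  have a: "a \<in> l1 \<and> l1_norm a = (\<Sum>i\<in>J. \<bar>a i\<bar>)"
    using finite_support_l1[OF J(1), of a] unfolding a_def by auto
  have "(\<Sum>i\<in>J. \<bar>a i\<bar>) = (\<Sum>i\<in>J. \<bar>x i\<bar> - t)"
    unfolding a_def using abs_sub_sgn_mult[OF t0 t_le] by (intro sum.cong) auto
  then have "l1_norm a + real k * t = (\<Sum>i\<in>J. \<bar>x i\<bar>)"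
    using a J(2) by (simp add: sum_subtractf)
  show ?thesis
  proof (rule that)
    show "x = (\<lambda>i. a i + b i)" unfolding a_def b_def by auto
    show "\<bar>b i\<bar> \<le> t" for i unfolding b_def using le_t t0 by (auto simp: sgn_if)
  qed (use a J(4) \<open>l1_norm a + real k * t = (\<Sum>i\<in>J. \<bar>x i\<bar>)\<close> in auto)
qed

lemma sum_abs_dunford_schwartz_le:
  assumes S: "dunford_schwartz S" and a: "a \<in> l1" and b: "\<And>i. \<bar>b i\<bar> \<le> t" and F: "finite F"
  shows "(\<Sum>i\<in>F. \<bar>S (\<lambda>j. a j + b j) i\<bar>) \<le> l1_norm a + real (card F) * t"
proof -
  have bl: "b \<in> linf" using b by (rule linfI)
  have "(\<Sum>i\<in>F. \<bar>S (\<lambda>j. a j + b j) i\<bar>) \<le> (\<Sum>i\<in>F. \<bar>S a i\<bar>) + (\<Sum>i\<in>F. \<bar>S b i\<bar>)"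
    unfolding dunford_schwartz_add[OF S l1_imp_linf[OF a] bl] sum.distrib[symmetric]
    by (intro sum_mono abs_triangle_ineq)
  also have "(\<Sum>i\<in>F. \<bar>S a i\<bar>) \<le> l1_norm a"
    using sum_abs_le_l1_norm[OF _ F] dunford_schwartz_l1[OF S a] by (meson order_trans)
  also have "(\<Sum>i\<in>F. \<bar>S b i\<bar>) \<le> (\<Sum>i\<in>F. t)"
    using abs_dunford_schwartz_le[OF S bl] sup_norm_le[OF b] by (intro sum_mono) (meson order_trans)
  finally show ?thesis by simp
qed

lemma ergodic_limit_majorized:
  assumes T: "dunford_schwartz T" and x: "x \<in> c0" and xh: "xh \<in> linf"
    and lim: "uniform_limit UNIV (ergodic_avg T x) xh sequentially"
  shows "majorized xh x"
  unfolding majorized_def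
proof
  fix k
  show "(\<Sum>n=1..k. rearr xh n) \<le> (\<Sum>n=1..k. rearr x n)"
  proof (cases "k = 0")
    case False
    then obtain a b t where xab: "x = (\<lambda>i. a i + b i)" and a: "a \<in> l1" and b: "\<And>i. \<bar>b i\<bar> \<le> t"
      and level: "l1_norm a + real k * t \<le> (\<Sum>n=1..k. rearr x n)"
      using c0_split_at_level[OF x] by blast
    show ?thesis
    proof (rule field_le_epsilon)
      fix e :: real assume e: "e > 0"
      obtain F where F: "finite F" "card F = k" "(\<Sum>n=1..k. rearr xh n) \<le> (\<Sum>i\<in>F. \<bar>xh i\<bar>) + e / 2"
        using sum_rearr_le_sum_abs[OF xh, of "e / 2" k] e by auto
      define \<delta> where "\<delta> = e / (2 * (real k + 1))"
      have "\<delta> > 0" unfolding \<delta>_def using e by auto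
      then obtain N where N: "\<forall>i. \<bar>ergodic_avg T x N i - xh i\<bar> < \<delta>"
        using lim unfolding uniform_limit_sequentially_iff dist_real_def by (metis UNIV_I order_refl)
      have "(\<Sum>i\<in>F. \<bar>xh i\<bar>) \<le> (\<Sum>i\<in>F. \<bar>ergodic_avg T x N i\<bar> + \<delta>)"
        using N by (intro sum_mono) (smt (verit))
      also have "\<dots> \<le> l1_norm a + real k * t + real k * \<delta>"
        using sum_abs_dunford_schwartz_le[OF dunford_schwartz_ergodic_avg[OF T, where n=N] a b F(1)] F(2) xab
        by (simp add: sum.distrib)
      finally have "(\<Sum>i\<in>F. \<bar>xh i\<bar>) \<le> l1_norm a + real k * t + real k * \<delta>" .
      moreover have "real k * \<delta> \<le> e / 2"
        unfolding \<delta>_def using e by (simp add: field_simps)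
      ultimately show "(\<Sum>n=1..k. rearr xh n) \<le> (\<Sum>n=1..k. rearr x n) + e"
        using F(3) level by linarith
    qed
  qed simp
qed

section \<open>The right shift\<close>

definition shift :: "seq \<Rightarrow> seq" where
  "shift x = (\<lambda>n. if n = 0 then 0 else x (n - 1))"

lemma shift_l1: "x \<in> l1 \<Longrightarrow> shift x \<in> l1 \<and> l1_norm (shift x) = l1_norm x"
proof -
  assume x: "x \<in> l1"
  have e: "(\<lambda>n. \<bar>shift x (Suc n)\<bar>) = (\<lambda>n. \<bar>x n\<bar>)" unfolding shift_def by auto
  have s: "summable (\<lambda>n. \<bar>shift x n\<bar>)"
    using x summable_Suc_iff[of "\<lambda>n. \<bar>shift x n\<bar>"] unfolding e l1_def by auto
  have "(\<Sum>n. \<bar>shift x (Suc n)\<bar>) = (\<Sum>n. \<bar>shift x n\<bar>) - \<bar>shift x 0\<bar>"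
    by (rule suminf_split_head[OF s])
  then show ?thesis using s unfolding l1_def l1_norm_def e by (simp add: shift_def)
qed

lemma dunford_schwartz_shift: "dunford_schwartz shift"
proof -
  have "shift x \<in> linf \<and> sup_norm (shift x) \<le> sup_norm x" if "x \<in> linf" for x
  proof -
    have "\<bar>shift x n\<bar> \<le> sup_norm x" for n
      using abs_le_sup_norm[OF that] sup_norm_nonneg[OF that] by (simp add: shift_def)
    then show ?thesis using linfI sup_norm_le by blast
  qed
  then show ?thesis
    unfolding dunford_schwartz_def linear_on_linf_def using shift_l1 by (auto simp: shift_def)
qed

lemma funpow_shift_one: "(shift ^^ k) one_seq n = (if k \<le> n then 1 else 0)"
  by (induction k arbitrary: n) (auto simp: shift_def one_seq_def)

lemma ergodic_avg_shift_one: "ergodic_avg shift one_seq n m = real (min n (Suc m)) / real n"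
proof -
  have "{k. k < n \<and> k \<le> m} = {..<min n (Suc m)}" by auto
  then have "(\<Sum>k<n. (shift ^^ k) one_seq m) = real (min n (Suc m))"
    by (simp add: funpow_shift_one sum.If_cases Int_def conj_commute)
  then show ?thesis unfolding ergodic_avg_def by simp
qed

text \<open>The averages of \<open>one_seq\<close> tend to 0 at every coordinate, but the \<open>n\<close>-th average still takes
  the value 1 at coordinate \<open>n - 1\<close>.\<close>

lemma ergodic_avg_shift_one_not_uniformly_convergent:
  assumes "xh \<in> linf"
  shows "\<not> (\<lambda>n. sup_norm (\<lambda>m. ergodic_avg shift one_seq n m - xh m)) \<longlonglongrightarrow> 0"
proof
  define A where "A = ergodic_avg shift one_seq"
  assume lim: "(\<lambda>n. sup_norm (\<lambda>m. A n m - xh m)) \<longlonglongrightarrow> 0"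
  have "A n \<in> linf" for n
    unfolding A_def by (rule dunford_schwartz_linf[OF dunford_schwartz_ergodic_avg[OF dunford_schwartz_shift]])
      (rule one_seq_linf)
  then have diff_linf: "(\<lambda>m. A n m - xh m) \<in> linf" for n
    using assms by (rule linf_diff)
  have "xh m = 0" for m
  proof -
    have "\<forall>n. norm (A n m - xh m) \<le> sup_norm (\<lambda>m. A n m - xh m)"
      using abs_le_sup_norm[OF diff_linf] by simp
    from always_eventually[OF this] lim have "(\<lambda>n. A n m - xh m) \<longlonglongrightarrow> 0"
      by (rule Lim_null_comparison)
    then have "(\<lambda>n. A n m) \<longlonglongrightarrow> xh m" by (simp add: LIM_zero_iff)
    moreover have "eventually (\<lambda>n. real (Suc m) / real n = A n m) sequentially"
      unfolding eventually_sequentially A_def ergodic_avg_shift_one by (intro exI[of _ "Suc m"]) auto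
    with lim_const_over_n have "(\<lambda>n. A n m) \<longlonglongrightarrow> 0"
      by (rule Lim_transform_eventually)
    ultimately show ?thesis by (rule LIMSEQ_unique)
  qed
  then have "1 \<le> sup_norm (\<lambda>m. A n m - xh m)" if "n \<ge> 1" for n
    using abs_le_sup_norm[OF diff_linf, of n "n - 1"] that by (simp add: A_def ergodic_avg_shift_one)
  then have "1 \<le> (0::real)"
    by (intro LIMSEQ_le_const[OF lim]) auto
  then show False by simp
qed

lemma symmetric_seq_space_subset_linf: "symmetric_seq_space E NE \<Longrightarrow> E \<subseteq> linf"
  unfolding symmetric_seq_space_def by blast

lemma rearr_one_seq_le: "n \<ge> 1 \<Longrightarrow> rearr one_seq n \<le> 1"
  using rearr_le_SUP_compl[OF one_seq_linf, of "{}" n] by (simp add: one_seq_def)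

lemma one_seq_not_c0: "one_seq \<notin> c0"
  unfolding c0_def one_seq_def using LIMSEQ_const_iff[of "1::real" 0] by auto

text \<open>A sequence that does not tend to 0 has, after rescaling, infinitely many entries of modulus at
  least 1, so its rearrangement dominates that of \<open>one_seq\<close>.\<close>

lemma symmetric_seq_space_not_c0_imp_one_seq:
  assumes E: "symmetric_seq_space E NE" and xE: "x \<in> E" and xc: "x \<notin> c0"
  shows "one_seq \<in> E"
proof -
  have xl: "x \<in> linf" using E xE symmetric_seq_space_subset_linf by blast
  obtain \<epsilon> where \<epsilon>: "\<epsilon> > 0" "\<And>N. \<exists>n\<ge>N. \<epsilon> \<le> \<bar>x n\<bar>"
    using xc unfolding c0_def LIMSEQ_iff by (auto simp: not_less)
  define y where "y = (\<lambda>n. (1 / \<epsilon>) * x n)"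
  have yE: "y \<in> E" unfolding y_def using E xE unfolding symmetric_seq_space_def by blast
  have yl: "y \<in> linf" unfolding y_def by (rule linf_scale[OF xl])
  have "1 \<le> rearr y n" if n: "n \<ge> 1" for n
  proof -
    have "infinite {h. \<epsilon> \<le> \<bar>x h\<bar>}"
      unfolding infinite_nat_iff_unbounded_le using \<epsilon>(2) by simp
    then obtain H where H: "finite H" "card H = n" "H \<subseteq> {h. \<epsilon> \<le> \<bar>x h\<bar>}"
      using infinite_arbitrarily_large by blast
    have "\<forall>h\<in>H. 1 \<le> \<bar>y h\<bar>"
      using H(3) \<epsilon>(1) by (auto simp: y_def abs_mult field_simps)
    then show ?thesis using rearr_ge_on_large_set[OF yl n H(1)] H(2) by simp
  qed
  then have "\<forall>n\<ge>1. rearr one_seq n \<le> rearr y n" using rearr_one_seq_le order_trans by blast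
  then show ?thesis
    using E yE one_seq_linf unfolding symmetric_seq_space_def by blast
qed

lemma fully_symmetric_subset_c0_iff:
  assumes "fully_symmetric E NE"
  shows "E \<subseteq> c0 \<longleftrightarrow> one_seq \<notin> E"
  using one_seq_not_c0 symmetric_seq_space_not_c0_imp_one_seq assms
  unfolding fully_symmetric_def by blast

lemma fully_symmetric_subset_c0_imp_uniform_IET:
  assumes FS: "fully_symmetric E NE" and c: "E \<subseteq> c0"
  shows "uniform_IET_property E"
  unfolding uniform_IET_property_def
proof (intro ballI allI impI)
  fix x T assume xE: "x \<in> E" and T: "dunford_schwartz T"
  obtain xh where xh: "xh \<in> linf" "uniform_limit UNIV (ergodic_avg T x) xh sequentially"
    using ergodic_avg_c0_uniform_limit[OF T] c xE by blast
  have "xh \<in> E"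
    using FS xE xh(1) ergodic_limit_majorized[OF T _ xh] c unfolding fully_symmetric_def by blast
  then show "\<exists>xh\<in>E. (\<lambda>n. sup_norm (\<lambda>m. ergodic_avg T x n m - xh m)) \<longlonglongrightarrow> 0"
    using uniform_limit_imp_sup_norm_tendsto_0[OF xh(2)] by blast
qed

lemma fully_symmetric_uniform_IET_imp_subset_c0:
  assumes FS: "fully_symmetric E NE" and U: "uniform_IET_property E"
  shows "E \<subseteq> c0"
proof (rule ccontr)
  assume "\<not> E \<subseteq> c0"
  then have "one_seq \<in> E" using fully_symmetric_subset_c0_iff[OF FS] by blast
  then obtain xh where "xh \<in> E" "(\<lambda>n. sup_norm (\<lambda>m. ergodic_avg shift one_seq n m - xh m)) \<longlonglongrightarrow> 0"
    using U dunford_schwartz_shift unfolding uniform_IET_property_def by blast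
  moreover have "E \<subseteq> linf"
    using FS symmetric_seq_space_subset_linf unfolding fully_symmetric_def by blast
  ultimately show False using ergodic_avg_shift_one_not_uniformly_convergent by blast
qed

theorem theorem3p6:
  assumes "fully_symmetric E NE"
  shows "(uniform_IET_property E \<longleftrightarrow> E \<subseteq> c0) \<and> (E \<subseteq> c0 \<longleftrightarrow> one_seq \<notin> E)"
  using fully_symmetric_uniform_IET_imp_subset_c0[OF assms] fully_symmetric_subset_c0_imp_uniform_IET[OF assms]
    fully_symmetric_subset_c0_iff[OF assms]
  by blast

end
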